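(* Assume that $\kappa_{\mathcal H}(X_i,X_i)<\infty$ almost surely for every $i$; that for every $y\in\mathcal Y$ the map $u\mapsto\ell(y,u)$ is convex and three times differentiable, $u\mapsto\partial_2\ell(y,u)$ is $\beta_{\ell;2}$-Lipschitz continuous, and $\sup_u|\partial_2^3\ell(y,u)|\le\xi_\ell$; and that $u\mapsto s(y,u)$ is $\gamma$-Lipschitz continuous for every $y$. Then for every $y\in\mathcal Y$, $$|S_{\lambda;D^y}(X_i,Y_i)-\tilde S^{\mathrm{IF}}_{\lambda;D^y}(X_i,Y_i)|\le\tau^{(2)}_{\lambda;i}(y)\ (1\le i\le n),\qquad|S_{\lambda;D^y}(X_{n+1},y)-\tilde S^{\mathrm{IF}}_{\lambda;D^y}(X_{n+1},y)|\le\tau^{(2)}_{\lambda;n+1}(y),$$ where $\tau^{(2)}_{\lambda;i}(y)=\sqrt{K_{i,i}}\sqrt{K_{n+1,n+1}}\min\Big(\frac{\gamma\rho^{(2)}_\lambda(y)}{\lambda^3(n+1)^2},\frac{2\gamma\rho^{(1)}_\lambda(y)}{\lambda(n+1)}\Big)$.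
   Context: Let $\mathcal X\subset\mathbb R^d$, $\mathcal Y\subset\mathbb R$, $D=\{(X_1,Y_1),\dots,(X_n,Y_n)\}$ i.i.d., $(X_{n+1},Y_{n+1})$ independent with the same law; $D^{y'}=D\cup\{(X_{n+1},y')\}$. $\mathcal H$ is an RKHS with kernel $\kappa_{\mathcal H}$, $K_x=\kappa_{\mathcal H}(x,\cdot)$, $K=(\kappa_{\mathcal H}(X_i,X_j))_{1\le i,j\le n+1}$, $\mathcal A=\mathrm{span}\{K_{X_1},\dots,K_{X_{n+1}}\}$. For a loss $\ell$ and $\lambda>0$, $\hat f_{\lambda;D^{y'}}$ minimizes $\frac1{n+1}\sum_{(x,y'')\in D^{y'}}\ell(y'',f(x))+\lambda\|f\|_{\mathcal H}^2$. Fix $z\in\mathcal Y$. Let $H(f)=\frac1{n+1}\sum_{i=1}^n\partial_2^2\ell(Y_i,f(X_i))K_{X_i}\otimes K_{X_i}+\frac1{n+1}\partial_2^2\ell(z,f(X_{n+1}))K_{X_{n+1}}\otimes K_{X_{n+1}}+2\lambda\mathrm{Id}$ with $(g\otimes g)h=\langle g,h\rangle_{\mathcal H}g$ and $H(f)^+$ the inverse of its restriction to $\mathcal A$; $\mathbf I_{\hat f}(X_{n+1},z')=-\frac1{n+1}\partial_2\ell(z',\hat f_{\lambda;D^z}(X_{n+1}))H(\hat f_{\lambda;D^z})^+K_{X_{n+1}}$ and $\tilde f^{\mathrm{IF}}_{\lambda;D^y}=\hat f_{\lambda;D^z}-\mathbf I_{\hat f}(X_{n+1},z)+\mathbf I_{\hat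 f}(X_{n+1},y)$. For $s:\mathcal Y\times\mathcal Y\to\mathbb R_+$: $S_{\lambda;D^y}(X_i,Y_i)=s(Y_i,\hat f_{\lambda;D^y}(X_i))$, $S_{\lambda;D^y}(X_{n+1},y)=s(y,\hat f_{\lambda;D^y}(X_{n+1}))$, $\tilde S^{\mathrm{IF}}_{\lambda;D^y}(X_i,Y_i)=s(Y_i,\tilde f^{\mathrm{IF}}_{\lambda;D^y}(X_i))$ ($i\le n$), $\tilde S^{\mathrm{IF}}_{\lambda;D^y}(X_{n+1},y)=s(y,\tilde f^{\mathrm{IF}}_{\lambda;D^y}(X_{n+1}))$. Further $\rho^{(1)}_\lambda(y)=\frac12|\partial_2\ell(y,\hat f_{\lambda;D^z}(X_{n+1}))-\partial_2\ell(z,\hat f_{\lambda;D^z}(X_{n+1}))|$, $\tilde\rho^{(1)}_\lambda(y)=(1+K_{n+1,n+1}\frac{\beta_{\ell;2}}{\lambda(n+1)})\rho^{(1)}_\lambda(y)$ and $\rho^{(2)}_\lambda(y)=\frac{\xi_\ell}2\sqrt{K_{n+1,n+1}}(\frac1{n+1}\sum_{i=1}^{n+1}K_{i,i}^{3/2})(\tilde\rho^{(1)}_\lambda(y))^2+2\lambda K_{n+1,n+1}\beta_{\ell;2}\tilde\rho^{(1)}_\lambda(y)$. *)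

theory Defs
  imports "HOL-Analysis.Analysis"
begin

text \<open>RKHS model: the RKHS is a real Hilbert space 'h together with the canonical
 feature map Kx x = kappa(x, .); a function f in 'h is evaluated at x by the reproducing
 property f(x) = inner f (Kx x). Data points are indexed 1..n, the test point is n+1.\<close>

definition eval_at :: "('x \<Rightarrow> 'h::real_inner) \<Rightarrow> 'h \<Rightarrow> 'x \<Rightarrow> real" where
  "eval_at Kx f x = inner f (Kx x)"

definition kmat :: "('x \<Rightarrow> 'h::real_inner) \<Rightarrow> (nat \<Rightarrow> 'x) \<Rightarrow> nat \<Rightarrow> nat \<Rightarrow> real" where
  "kmat Kx X i j = inner (Kx (X i)) (Kx (X j))"

text \<open>Regularised empirical risk on D^{y'} = D \<union> {(X_{n+1}, y')}.\<close>
definition krr_obj ::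
  "('x \<Rightarrow> 'h::real_inner) \<Rightarrow> (real \<Rightarrow> real \<Rightarrow> real) \<Rightarrow> real \<Rightarrow> nat \<Rightarrow> (nat \<Rightarrow> 'x)
   \<Rightarrow> (nat \<Rightarrow> real) \<Rightarrow> real \<Rightarrow> 'h \<Rightarrow> real" where
  "krr_obj Kx loss lam n X Y y' f =
     (1 / real (n + 1)) * ((\<Sum>i = 1..n. loss (Y i) (eval_at Kx f (X i)))
                          + loss y' (eval_at Kx f (X (Suc n))))
     + lam * (norm f)\<^sup>2"

definition krr_min ::
  "('x \<Rightarrow> 'h::real_inner) \<Rightarrow> (real \<Rightarrow> real \<Rightarrow> real) \<Rightarrow> real \<Rightarrow> nat \<Rightarrow> (nat \<Rightarrow> 'x)
   \<Rightarrow> (nat \<Rightarrow> real) \<Rightarrow> real \<Rightarrow> 'h" where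
  "krr_min Kx loss lam n X Y y' =
     (SOME f. \<forall>g. krr_obj Kx loss lam n X Y y' f \<le> krr_obj Kx loss lam n X Y y' g)"

text \<open>The operator H(f) (with second derivative l2 of the loss, label z at X_{n+1}).\<close>
definition hess_op ::
  "('x \<Rightarrow> 'h::real_inner) \<Rightarrow> (real \<Rightarrow> real \<Rightarrow> real) \<Rightarrow> real \<Rightarrow> nat \<Rightarrow> (nat \<Rightarrow> 'x)
   \<Rightarrow> (nat \<Rightarrow> real) \<Rightarrow> real \<Rightarrow> 'h \<Rightarrow> 'h \<Rightarrow> 'h" where
  "hess_op Kx l2 lam n X Y z f h =
     (1 / real (n + 1)) *\<^sub>R
       ((\<Sum>i = 1..n. (l2 (Y i) (eval_at Kx f (X i)) * inner (Kx (X i)) h) *\<^sub>R Kx (X i))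
        + (l2 z (eval_at Kx f (X (Suc n))) * inner (Kx (X (Suc n))) h) *\<^sub>R Kx (X (Suc n)))
     + (2 * lam) *\<^sub>R h"

definition span_A :: "('x \<Rightarrow> 'h::real_inner) \<Rightarrow> nat \<Rightarrow> (nat \<Rightarrow> 'x) \<Rightarrow> 'h set" where
  "span_A Kx n X = span ((\<lambda>i. Kx (X i)) ` {1..Suc n})"

definition hess_pinv ::
  "('x \<Rightarrow> 'h::real_inner) \<Rightarrow> (real \<Rightarrow> real \<Rightarrow> real) \<Rightarrow> real \<Rightarrow> nat \<Rightarrow> (nat \<Rightarrow> 'x)
   \<Rightarrow> (nat \<Rightarrow> real) \<Rightarrow> real \<Rightarrow> 'h \<Rightarrow> 'h \<Rightarrow> 'h" where
  "hess_pinv Kx l2 lam n X Y z f g =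
     (THE a. a \<in> span_A Kx n X \<and> hess_op Kx l2 lam n X Y z f a = g)"

text \<open>Influence term I_{hat f}(X_{n+1}, z') (l1 = first derivative of the loss).\<close>
definition infl ::
  "('x \<Rightarrow> 'h::real_inner) \<Rightarrow> (real \<Rightarrow> real \<Rightarrow> real) \<Rightarrow> (real \<Rightarrow> real \<Rightarrow> real)
   \<Rightarrow> (real \<Rightarrow> real \<Rightarrow> real) \<Rightarrow> real \<Rightarrow> nat \<Rightarrow> (nat \<Rightarrow> 'x) \<Rightarrow> (nat \<Rightarrow> real) \<Rightarrow> real
   \<Rightarrow> real \<Rightarrow> 'h" where
  "infl Kx loss l1 l2 lam n X Y z z' =
     (let fz = krr_min Kx loss lam n X Y z in
      (- (1 / real (n + 1)) * l1 z' (eval_at Kx fz (X (Suc n))))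
        *\<^sub>R hess_pinv Kx l2 lam n X Y z fz (Kx (X (Suc n))))"

definition f_IF ::
  "('x \<Rightarrow> 'h::real_inner) \<Rightarrow> (real \<Rightarrow> real \<Rightarrow> real) \<Rightarrow> (real \<Rightarrow> real \<Rightarrow> real)
   \<Rightarrow> (real \<Rightarrow> real \<Rightarrow> real) \<Rightarrow> real \<Rightarrow> nat \<Rightarrow> (nat \<Rightarrow> 'x) \<Rightarrow> (nat \<Rightarrow> real) \<Rightarrow> real
   \<Rightarrow> real \<Rightarrow> 'h" where
  "f_IF Kx loss l1 l2 lam n X Y z y =
     krr_min Kx loss lam n X Y z - infl Kx loss l1 l2 lam n X Y z z + infl Kx loss l1 l2 lam n X Y z y"

definition rho1 ::
  "('x \<Rightarrow> 'h::real_inner) \<Rightarrow> (real \<Rightarrow> real \<Rightarrow> real) \<Rightarrow> (real \<Rightarrow> real \<Rightarrow> real)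
   \<Rightarrow> real \<Rightarrow> nat \<Rightarrow> (nat \<Rightarrow> 'x) \<Rightarrow> (nat \<Rightarrow> real) \<Rightarrow> real \<Rightarrow> real \<Rightarrow> real" where
  "rho1 Kx loss l1 lam n X Y z y =
     (let u = eval_at Kx (krr_min Kx loss lam n X Y z) (X (Suc n)) in
      (1 / 2) * \<bar>l1 y u - l1 z u\<bar>)"

definition rho1t ::
  "('x \<Rightarrow> 'h::real_inner) \<Rightarrow> (real \<Rightarrow> real \<Rightarrow> real) \<Rightarrow> (real \<Rightarrow> real \<Rightarrow> real)
   \<Rightarrow> real \<Rightarrow> real \<Rightarrow> nat \<Rightarrow> (nat \<Rightarrow> 'x) \<Rightarrow> (nat \<Rightarrow> real) \<Rightarrow> real \<Rightarrow> real \<Rightarrow> real" where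
  "rho1t Kx loss l1 \<beta> lam n X Y z y =
     (1 + kmat Kx X (Suc n) (Suc n) * \<beta> / (lam * real (n + 1))) * rho1 Kx loss l1 lam n X Y z y"

definition rho2 ::
  "('x \<Rightarrow> 'h::real_inner) \<Rightarrow> (real \<Rightarrow> real \<Rightarrow> real) \<Rightarrow> (real \<Rightarrow> real \<Rightarrow> real)
   \<Rightarrow> real \<Rightarrow> real \<Rightarrow> real \<Rightarrow> nat \<Rightarrow> (nat \<Rightarrow> 'x) \<Rightarrow> (nat \<Rightarrow> real) \<Rightarrow> real \<Rightarrow> real \<Rightarrow> real" where
  "rho2 Kx loss l1 \<beta> \<xi> lam n X Y z y =
     (let r = rho1t Kx loss l1 \<beta> lam n X Y z y; Knn = kmat Kx X (Suc n) (Suc n) in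
      (\<xi> / 2) * sqrt Knn * ((1 / real (n + 1)) * (\<Sum>i = 1..Suc n. kmat Kx X i i powr (3/2))) * r\<^sup>2
      + 2 * lam * Knn * \<beta> * r)"

definition tau2 ::
  "('x \<Rightarrow> 'h::real_inner) \<Rightarrow> (real \<Rightarrow> real \<Rightarrow> real) \<Rightarrow> (real \<Rightarrow> real \<Rightarrow> real)
   \<Rightarrow> real \<Rightarrow> real \<Rightarrow> real \<Rightarrow> real \<Rightarrow> nat \<Rightarrow> (nat \<Rightarrow> 'x) \<Rightarrow> (nat \<Rightarrow> real) \<Rightarrow> real
   \<Rightarrow> nat \<Rightarrow> real \<Rightarrow> real" where
  "tau2 Kx loss l1 \<beta> \<xi> \<gamma> lam n X Y z i y =
     sqrt (kmat Kx X i i) * sqrt (kmat Kx X (Suc n) (Suc n)) *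
     min (\<gamma> * rho2 Kx loss l1 \<beta> \<xi> lam n X Y z y / (lam ^ 3 * (real (n + 1))\<^sup>2))
         (2 * \<gamma> * rho1 Kx loss l1 lam n X Y z y / (lam * real (n + 1)))"

end

(* Let f and g be the minimisers for the labels y and z at X_{n+1}. Both satisfy a stationarity
   equation  sum_i phi_i(<f, K_{X_i}>) K_{X_i} + 2 lambda f = 0  whose terms differ only at i = n+1.
   Pairing the difference of the two equations with f - g and using that the derivative of a convex
   loss is monotone gives ||f - g|| <= rho1 sqrt(K_{n+1,n+1}) / (lambda (n+1)). The influence
   correction f^IF - g is one Newton step from g of the same size, which gives the first bound.
   For the second, H(g) (f - f^IF) is a combination of the K_{X_i} whose coefficients are second-order
   Taylor remainders of the loss derivative, plus the change of curvature at X_{n+1}; since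
   H(g) >= 2 lambda, ||f - f^IF|| is quadratic in ||f - g||. Finally f(x) = <f, K_x> and the Lipschitz
   continuity of s turn the bound on ||f - f^IF|| into the bound on the scores. *)

theory Submission
  imports Defs
begin

section \<open>Derivatives of convex and Lipschitz functions\<close>

lemma convex_on_deriv_mono:
  fixes f :: "real \<Rightarrow> real"
  assumes convex: "convex_on UNIV f" and deriv: "\<And>u. (f has_real_derivative f' u) (at u)"
  shows "mono f'"
proof (rule monoI)
  fix a b :: real
  assume "a \<le> b"
  have "f b - f a \<ge> f' a * (b - a)" "f a - f b \<ge> f' b * (a - b)"
    using deriv by (auto intro!: convex_on_imp_above_tangent[OF convex])
  then have "0 \<le> (f' b - f' a) * (b - a)"
    by (simp add: algebra_simps)
  with \<open>a \<le> b\<close> show "f' a \<le> f' b"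
    by (cases "a = b") (auto simp: zero_le_mult_iff)
qed

lemma convex_on_second_deriv_nonneg:
  fixes f :: "real \<Rightarrow> real"
  assumes "convex_on UNIV f" and "\<And>u. (f has_real_derivative f' u) (at u)"
    and "(f' has_real_derivative f'' x) (at x)"
  shows "0 \<le> f'' x"
  using mono_on_imp_deriv_nonneg[OF convex_on_deriv_mono[OF assms(1,2)] assms(3)] by simp

lemma lipschitz_on_deriv_bound:
  fixes f :: "real \<Rightarrow> real"
  assumes lipschitz: "\<beta>-lipschitz_on UNIV f" and deriv: "(f has_real_derivative D) (at x)"
  shows "\<bar>D\<bar> \<le> \<beta>"
proof (rule tendsto_upperbound)
  show "((\<lambda>t. \<bar>(f t - f x) / (t - x)\<bar>) \<longlongrightarrow> \<bar>D\<bar>) (at x)"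
    using deriv by (intro tendsto_rabs) (simp add: has_field_derivative_iff)
  have "\<bar>f t - f x\<bar> \<le> \<beta> * \<bar>t - x\<bar>" for t
    using lipschitz_onD[OF lipschitz, of t x] by (simp add: dist_real_def)
  then have "\<bar>(f t - f x) / (t - x)\<bar> \<le> \<beta>" for t
    using lipschitz_on_nonneg[OF lipschitz]
    by (cases "t = x") (auto simp: abs_divide divide_le_eq)
  then show "\<forall>\<^sub>F t in at x. \<bar>(f t - f x) / (t - x)\<bar> \<le> \<beta>"
    by simp
qed simp

lemma taylor_remainder_le:
  fixes f :: "real \<Rightarrow> real"
  assumes d1: "\<And>u. (f has_real_derivative f' u) (at u)"
    and d2: "\<And>u. (f' has_real_derivative f'' u) (at u)"
    and bound: "\<And>u. \<bar>f'' u\<bar> \<le> \<xi>"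
  shows "\<bar>f x - f c - f' c * (x - c)\<bar> \<le> \<xi> / 2 * (x - c)\<^sup>2"
proof (cases "x = c")
  case False
  define diff where "diff m = (if m = 0 then f else if m = 1 then f' else f'')" for m :: nat
  have "\<exists>t. (if x < c then x < t \<and> t < c else c < t \<and> t < x) \<and>
      f x = (\<Sum>m<2. diff m c / fact m * (x - c) ^ m) + diff 2 t / fact 2 * (x - c)\<^sup>2"
    by (rule Taylor[of 2 diff f "min x c" "max x c"])
      (use False in \<open>auto simp: diff_def d1 d2 less_2_cases_iff\<close>)
  then obtain t where "f x = (\<Sum>m<2. diff m c / fact m * (x - c) ^ m) + diff 2 t / fact 2 * (x - c)\<^sup>2"
    by blast
  then have "f x - f c - f' c * (x - c) = f'' t / 2 * (x - c)\<^sup>2"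
    by (simp add: diff_def numeral_2_eq_2 lessThan_Suc)
  also have "\<bar>\<dots>\<bar> \<le> \<xi> / 2 * (x - c)\<^sup>2"
    using bound[of t] by (simp add: abs_mult mult_right_mono)
  finally show ?thesis .
qed simp

lemma mono_imp_diff_mult_nonneg:
  fixes \<phi> :: "real \<Rightarrow> real"
  assumes "mono \<phi>"
  shows "0 \<le> (\<phi> a - \<phi> b) * (a - b)"
  using monoD[OF assms, of a b] monoD[OF assms, of b a]
  by (cases "a \<le> b") (auto intro: mult_nonpos_nonpos)

lemma le_divide_if_scaled_square_le:
  fixes a b x :: real
  assumes "a * x\<^sup>2 \<le> b * x" and "0 < a" and "0 \<le> x" and "0 \<le> b"
  shows "x \<le> b / a"
proof (cases "x = 0")
  case False
  with assms have "a * x \<le> b"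
    by (simp add: power2_eq_square)
  with assms(2) show ?thesis
    by (simp add: field_simps)
qed (use assms in simp)

section \<open>Regularised risk in a Hilbert space\<close>

definition reg_risk :: "(nat \<Rightarrow> real \<Rightarrow> real) \<Rightarrow> (nat \<Rightarrow> 'h::real_inner) \<Rightarrow> nat set \<Rightarrow> real \<Rightarrow> 'h \<Rightarrow> real"
  where "reg_risk \<phi> k I lam f = (\<Sum>i\<in>I. \<phi> i (inner f (k i))) + lam * (norm f)\<^sup>2"

lemma norm_midpoint_square:
  fixes a b :: "'h::real_inner"
  shows "(norm ((1/2) *\<^sub>R (a + b)))\<^sup>2 = ((norm a)\<^sup>2 + (norm b)\<^sup>2) / 2 - (norm (a - b))\<^sup>2 / 4"
  by (simp add: power2_norm_eq_inner inner_add_left inner_add_right inner_diff_left inner_diff_right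
      inner_commute field_simps)

lemma reg_risk_midpoint_le:
  assumes "\<And>i. i \<in> I \<Longrightarrow> convex_on UNIV (\<phi> i)"
  shows "reg_risk \<phi> k I lam ((1/2) *\<^sub>R (a + b))
    \<le> (reg_risk \<phi> k I lam a + reg_risk \<phi> k I lam b) / 2 - lam / 4 * (norm (a - b))\<^sup>2"
proof -
  have "\<phi> i (inner ((1/2) *\<^sub>R (a + b)) (k i)) \<le> (\<phi> i (inner a (k i)) + \<phi> i (inner b (k i))) / 2"
    if "i \<in> I" for i
    using convex_onD[OF assms[OF that], of "1/2" "inner a (k i)" "inner b (k i)"]
    by (simp add: inner_add_left algebra_simps)
  then have "(\<Sum>i\<in>I. \<phi> i (inner ((1/2) *\<^sub>R (a + b)) (k i)))
      \<le> (\<Sum>i\<in>I. (\<phi> i (inner a (k i)) + \<phi> i (inner b (k i))) / 2)"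
    by (rule sum_mono)
  also have "\<dots> = ((\<Sum>i\<in>I. \<phi> i (inner a (k i))) + (\<Sum>i\<in>I. \<phi> i (inner b (k i)))) / 2"
    by (simp add: sum.distrib flip: sum_divide_distrib)
  finally have "(\<Sum>i\<in>I. \<phi> i (inner ((1/2) *\<^sub>R (a + b)) (k i)))
      \<le> ((\<Sum>i\<in>I. \<phi> i (inner a (k i))) + (\<Sum>i\<in>I. \<phi> i (inner b (k i)))) / 2" .
  then show ?thesis
    unfolding reg_risk_def norm_midpoint_square by (simp add: field_simps)
qed

lemma reg_risk_lower_bound:
  assumes lam: "0 < lam"
    and convex: "\<And>i. i \<in> I \<Longrightarrow> convex_on UNIV (\<phi> i)"
    and deriv: "\<And>i t. i \<in> I \<Longrightarrow> (\<phi> i has_real_derivative \<phi>' i t) (at t)"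
  shows "(\<Sum>i\<in>I. \<phi> i 0) - (\<Sum>i\<in>I. \<bar>\<phi>' i 0\<bar> * norm (k i))\<^sup>2 / (4 * lam) \<le> reg_risk \<phi> k I lam f"
proof -
  define M where "M = (\<Sum>i\<in>I. \<bar>\<phi>' i 0\<bar> * norm (k i))"
  have "\<phi> i 0 - \<bar>\<phi>' i 0\<bar> * norm (k i) * norm f \<le> \<phi> i (inner f (k i))" if i: "i \<in> I" for i
  proof -
    have "\<phi>' i 0 * inner f (k i) \<le> \<phi> i (inner f (k i)) - \<phi> i 0"
      using convex_on_imp_above_tangent[OF convex[OF i], of 0 "inner f (k i)" "\<phi>' i 0"] deriv[OF i]
      by simp
    moreover have "\<bar>\<phi>' i 0 * inner f (k i)\<bar> \<le> \<bar>\<phi>' i 0\<bar> * norm (k i) * norm f"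
      using Cauchy_Schwarz_ineq2[of f "k i"]
      by (auto simp: abs_mult mult.assoc mult.commute[of "norm f"] intro: mult_left_mono)
    ultimately show ?thesis
      by linarith
  qed
  then have "(\<Sum>i\<in>I. \<phi> i 0) - M * norm f \<le> (\<Sum>i\<in>I. \<phi> i (inner f (k i)))"
    using sum_mono[of I "\<lambda>i. \<phi> i 0 - \<bar>\<phi>' i 0\<bar> * norm (k i) * norm f"]
    by (simp add: M_def sum_subtractf sum_distrib_right)
  moreover have "0 \<le> (2 * lam * norm f - M)\<^sup>2 / (4 * lam)"
    using lam by simp
  moreover have "(2 * lam * norm f - M)\<^sup>2 / (4 * lam) = lam * (norm f)\<^sup>2 - M * norm f + M\<^sup>2 / (4 * lam)"
    using lam by (simp add: field_simps power2_eq_square)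
  ultimately show ?thesis
    unfolding reg_risk_def M_def[symmetric] by linarith
qed

text \<open>The regularisation makes the risk strongly convex, so every minimising sequence is Cauchy.\<close>

lemma reg_risk_minimizing_seq_Cauchy:
  assumes lam: "0 < lam" and convex: "\<And>i. i \<in> I \<Longrightarrow> convex_on UNIV (\<phi> i)"
    and m_le: "\<And>h. m \<le> reg_risk \<phi> k I lam h"
    and F: "\<And>j. reg_risk \<phi> k I lam (F j) < m + 1 / real (Suc j)"
  shows "Cauchy F"
proof (rule CauchyI)
  fix e :: real
  assume "0 < e"
  then obtain M where M: "1 / real (Suc M) < lam / 4 * e\<^sup>2"
    using reals_Archimedean[of "lam / 4 * e\<^sup>2"] lam by (auto simp: inverse_eq_divide)
  have "norm (F p - F q) < e" if "M \<le> p" "M \<le> q" for p q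
  proof -
    have "1 / real (Suc p) \<le> 1 / real (Suc M)" "1 / real (Suc q) \<le> 1 / real (Suc M)"
      using that by (simp_all add: frac_le)
    moreover have "reg_risk \<phi> k I lam ((1/2) *\<^sub>R (F p + F q))
        \<le> (reg_risk \<phi> k I lam (F p) + reg_risk \<phi> k I lam (F q)) / 2 - lam / 4 * (norm (F p - F q))\<^sup>2"
      by (rule reg_risk_midpoint_le) (rule convex)
    ultimately have "lam / 4 * (norm (F p - F q))\<^sup>2 < lam / 4 * e\<^sup>2"
      using m_le[of "(1/2) *\<^sub>R (F p + F q)"] F[of p] F[of q] M
      by argo
    with lam \<open>0 < e\<close> show ?thesis
      by (simp add: power_less_imp_less_base)
  qed
  then show "\<exists>M. \<forall>p\<ge>M. \<forall>q\<ge>M. norm (F p - F q) < e"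
    by blast
qed

lemma reg_risk_has_minimizer:
  fixes k :: "nat \<Rightarrow> 'h::{real_inner, complete_space}"
  assumes lam: "0 < lam"
    and convex: "\<And>i. i \<in> I \<Longrightarrow> convex_on UNIV (\<phi> i)"
    and deriv: "\<And>i t. i \<in> I \<Longrightarrow> (\<phi> i has_real_derivative \<phi>' i t) (at t)"
  shows "\<exists>f. \<forall>h. reg_risk \<phi> k I lam f \<le> reg_risk \<phi> k I lam h"
proof -
  let ?J = "reg_risk \<phi> k I lam"
  define m where "m = Inf (range ?J)"
  have bdd: "bdd_below (range ?J)"
    using reg_risk_lower_bound[where \<phi> = \<phi> and \<phi>' = \<phi>' and I = I and k = k, OF lam convex deriv]
    unfolding bdd_below_def by blast
  have m_le: "m \<le> ?J h" for h
    unfolding m_def by (rule cInf_lower[OF rangeI bdd])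
  have "\<exists>f. ?J f < m + 1 / real (Suc j)" for j
    using cInf_lessD[of "range ?J" "m + 1 / real (Suc j)"] by (auto simp: m_def)
  then obtain F where F: "\<And>j. ?J (F j) < m + 1 / real (Suc j)"
    by metis
  then have "Cauchy F"
    by (intro reg_risk_minimizing_seq_Cauchy[OF lam convex m_le])
  then obtain f where F_lim: "F \<longlonglongrightarrow> f"
    using Cauchy_convergent convergent_def by blast
  have "(\<lambda>j. ?J (F j)) \<longlonglongrightarrow> ?J f"
    unfolding reg_risk_def
  proof (intro tendsto_intros F_lim)
    fix i
    assume "i \<in> I"
    then have "isCont (\<phi> i) (inner f (k i))"
      using deriv by (blast intro: DERIV_isCont)
    then show "(\<lambda>j. \<phi> i (inner (F j) (k i))) \<longlonglongrightarrow> \<phi> i (inner f (k i))"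
      by (rule isCont_tendsto_compose) (intro tendsto_intros F_lim)
  qed
  moreover have "(\<lambda>j. ?J (F j)) \<longlonglongrightarrow> m"
  proof (rule tendsto_sandwich[of "\<lambda>j. m" _ _ "\<lambda>j. m + 1 / real (Suc j)"])
    show "(\<lambda>j. m + 1 / real (Suc j)) \<longlonglongrightarrow> m"
      using tendsto_add[OF tendsto_const LIMSEQ_inverse_real_of_nat, of m] by (simp add: inverse_eq_divide)
    show "\<forall>\<^sub>F j in sequentially. ?J (F j) \<le> m + 1 / real (Suc j)"
      using F by (simp add: less_imp_le)
  qed (use m_le in simp_all)
  ultimately have "?J f = m"
    by (rule LIMSEQ_unique)
  with m_le show ?thesis
    by metis
qed

lemma reg_risk_minimizer_stationary:
  assumes deriv: "\<And>i t. i \<in> I \<Longrightarrow> (\<phi> i has_real_derivative \<phi>' i t) (at t)"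
    and min: "\<And>h. reg_risk \<phi> k I lam f \<le> reg_risk \<phi> k I lam h"
  shows "(\<Sum>i\<in>I. \<phi>' i (inner f (k i)) *\<^sub>R k i) + (2 * lam) *\<^sub>R f = 0"
proof -
  define v where "v = (\<Sum>i\<in>I. \<phi>' i (inner f (k i)) *\<^sub>R k i) + (2 * lam) *\<^sub>R f"
  define \<psi> where "\<psi> t = (\<Sum>i\<in>I. \<phi> i (inner f (k i) + t * inner v (k i)))
      + lam * (inner f f + 2 * t * inner f v + t\<^sup>2 * inner v v)" for t
  have \<psi>_eq: "\<psi> t = reg_risk \<phi> k I lam (f + t *\<^sub>R v)" for t
    unfolding \<psi>_def reg_risk_def power2_norm_eq_inner
    by (simp add: inner_add_left inner_add_right inner_commute algebra_simps power2_eq_square)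
  have "((\<lambda>t. \<phi> i (inner f (k i) + t * inner v (k i))) has_real_derivative
      \<phi>' i (inner f (k i)) * inner v (k i)) (at 0)" if "i \<in> I" for i
  proof -
    have "(\<phi> i has_real_derivative \<phi>' i (inner f (k i))) (at (inner f (k i) + 0 * inner v (k i)))"
      using deriv[OF that] by simp
    moreover have "((\<lambda>t. inner f (k i) + t * inner v (k i)) has_real_derivative inner v (k i)) (at 0)"
      by (auto intro!: derivative_eq_intros)
    ultimately show ?thesis
      by (rule DERIV_chain2)
  qed
  then have "(\<psi> has_real_derivative
      (\<Sum>i\<in>I. \<phi>' i (inner f (k i)) * inner v (k i)) + lam * (2 * inner f v)) (at 0)"
    unfolding \<psi>_def by (auto intro!: DERIV_add DERIV_sum derivative_eq_intros)
  moreover have inner_v: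
    "inner v w = (\<Sum>i\<in>I. \<phi>' i (inner f (k i)) * inner (k i) w) + 2 * lam * inner f w" for w
    unfolding v_def by (simp add: inner_add_left inner_sum_left)
  have "(\<Sum>i\<in>I. \<phi>' i (inner f (k i)) * inner v (k i)) + lam * (2 * inner f v) = inner v v"
    using inner_v[of v] by (simp add: inner_commute)
  ultimately have "(\<psi> has_real_derivative inner v v) (at 0)"
    by simp
  moreover have "\<forall>t. \<bar>0 - t\<bar> < 1 \<longrightarrow> \<psi> 0 \<le> \<psi> t"
    using min by (simp add: \<psi>_eq)
  ultimately have "inner v v = 0"
    by (rule DERIV_local_min[OF _ zero_less_one])
  then show ?thesis
    by (simp add: v_def)
qed

section \<open>The Hessian of the regularised risk\<close>

definition reg_hessian :: "(nat \<Rightarrow> real) \<Rightarrow> (nat \<Rightarrow> 'h::real_inner) \<Rightarrow> nat set \<Rightarrow> real \<Rightarrow> 'h \<Rightarrow> 'h"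
  where "reg_hessian c k I lam h = (\<Sum>i\<in>I. (c i * inner (k i) h) *\<^sub>R k i) + (2 * lam) *\<^sub>R h"

lemma linear_reg_hessian: "linear (reg_hessian c k I lam)"
proof (rule linearI)
  show "reg_hessian c k I lam (a + b) = reg_hessian c k I lam a + reg_hessian c k I lam b" for a b
    by (simp add: reg_hessian_def inner_add_right distrib_left scaleR_add_left scaleR_add_right sum.distrib)
  show "reg_hessian c k I lam (r *\<^sub>R a) = r *\<^sub>R reg_hessian c k I lam a" for r a
    by (simp add: reg_hessian_def scaleR_add_right scaleR_sum_right mult.left_commute)
qed

lemma inner_reg_hessian_ge:
  assumes "\<And>i. i \<in> I \<Longrightarrow> 0 \<le> c i"
  shows "2 * lam * (norm h)\<^sup>2 \<le> inner (reg_hessian c k I lam h) h"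
proof -
  have "inner (reg_hessian c k I lam h) h = (\<Sum>i\<in>I. c i * (inner (k i) h)\<^sup>2) + 2 * lam * inner h h"
    by (simp add: reg_hessian_def inner_add_left inner_sum_left power2_eq_square mult.assoc)
  moreover have "0 \<le> (\<Sum>i\<in>I. c i * (inner (k i) h)\<^sup>2)"
    using assms by (intro sum_nonneg) simp
  ultimately show ?thesis
    by (simp add: power2_norm_eq_inner)
qed

lemma norm_le_reg_hessian:
  assumes "\<And>i. i \<in> I \<Longrightarrow> 0 \<le> c i" and "0 < lam"
  shows "norm h \<le> norm (reg_hessian c k I lam h) / (2 * lam)"
proof (rule le_divide_if_scaled_square_le)
  show "2 * lam * (norm h)\<^sup>2 \<le> norm (reg_hessian c k I lam h) * norm h"
    using inner_reg_hessian_ge[where c = c and I = I and lam = lam and h = h and k = k, OF assms(1)]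
      norm_cauchy_schwarz[of "reg_hessian c k I lam h" h]
    by linarith
qed (use assms(2) in simp_all)

lemma reg_hessian_eq_iff:
  assumes "\<And>i. i \<in> I \<Longrightarrow> 0 \<le> c i" and "0 < lam"
  shows "reg_hessian c k I lam a = reg_hessian c k I lam b \<longleftrightarrow> a = b"
proof
  assume "reg_hessian c k I lam a = reg_hessian c k I lam b"
  then have "reg_hessian c k I lam (a - b) = 0"
    by (simp add: linear_diff[OF linear_reg_hessian])
  then show "a = b"
    using norm_le_reg_hessian[where c = c and I = I and h = "a - b" and k = k, OF assms] by simp
qed simp

text \<open>The equation \<open>reg_hessian c k I lam a = k j\<close> is the stationarity condition of the
  regularised risk with \<open>\<phi> i t = c i * t\<^sup>2 / 2 - [i = j] * t\<close>, whose minimiser exists.\<close>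

lemma reg_hessian_solvable:
  fixes k :: "nat \<Rightarrow> 'h::{real_inner, complete_space}"
  assumes "finite I" and "j \<in> I" and lam: "0 < lam" and c: "\<And>i. i \<in> I \<Longrightarrow> 0 \<le> c i"
  shows "\<exists>a\<in>span (k ` I). reg_hessian c k I lam a = k j"
proof -
  define \<phi> where "\<phi> i t = c i * t\<^sup>2 / 2 - (if i = j then t else 0)" for i t
  define \<phi>' where "\<phi>' i t = c i * t - (if i = j then 1 else 0)" for i t
  have deriv: "(\<phi> i has_real_derivative \<phi>' i t) (at t)" for i t
    unfolding \<phi>_def \<phi>'_def by (auto intro!: derivative_eq_intros)
  have "convex_on UNIV (\<phi> i)" if "i \<in> I" for i
    using deriv c[OF that]
    by (intro convex_on_realI[where f' = "\<phi>' i"]) (auto simp: \<phi>'_def mult_left_mono)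
  then obtain a where "\<forall>h. reg_risk \<phi> k I lam a \<le> reg_risk \<phi> k I lam h"
    using reg_risk_has_minimizer[where \<phi> = \<phi> and k = k, OF lam _ deriv] by blast
  then have "(\<Sum>i\<in>I. \<phi>' i (inner a (k i)) *\<^sub>R k i) + (2 * lam) *\<^sub>R a = 0"
    by (intro reg_risk_minimizer_stationary[where \<phi> = \<phi>] deriv) blast
  moreover have "(\<Sum>i\<in>I. \<phi>' i (inner a (k i)) *\<^sub>R k i)
      = (\<Sum>i\<in>I. (c i * inner (k i) a) *\<^sub>R k i - (if i = j then k i else 0))"
    by (intro sum.cong) (auto simp: \<phi>'_def inner_commute scaleR_left_diff_distrib)
  moreover have "\<dots> = (\<Sum>i\<in>I. (c i * inner (k i) a) *\<^sub>R k i) - k j"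
    using assms(1,2) by (simp add: sum_subtractf)
  ultimately have stationary: "(\<Sum>i\<in>I. (c i * inner (k i) a) *\<^sub>R k i) + (2 * lam) *\<^sub>R a = k j"
    by (simp add: algebra_simps)
  have "a = (1 / (2 * lam)) *\<^sub>R ((2 * lam) *\<^sub>R a)"
    using lam by simp
  also have "\<dots> = (1 / (2 * lam)) *\<^sub>R (k j - (\<Sum>i\<in>I. (c i * inner (k i) a) *\<^sub>R k i))"
    by (simp flip: stationary)
  also have "\<dots> \<in> span (k ` I)"
    using assms(2) by (intro span_scale span_diff span_sum span_base) auto
  finally show ?thesis
    using stationary unfolding reg_hessian_def by blast
qed

section \<open>Stationary points of two risks differing in one sample\<close>

locale stationary_pair =
  fixes k :: "nat \<Rightarrow> 'h::real_inner" and I :: "nat set" and j :: nat and lam :: real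
    and \<phi> \<psi> :: "nat \<Rightarrow> real \<Rightarrow> real" and f g :: 'h
  assumes finite_I: "finite I" and j_in_I: "j \<in> I" and lam_pos: "0 < lam"
    and agree: "\<And>i. i \<in> I \<Longrightarrow> i \<noteq> j \<Longrightarrow> \<phi> i = \<psi> i"
    and stationary_f: "(\<Sum>i\<in>I. \<phi> i (inner f (k i)) *\<^sub>R k i) + (2 * lam) *\<^sub>R f = 0"
    and stationary_g: "(\<Sum>i\<in>I. \<psi> i (inner g (k i)) *\<^sub>R k i) + (2 * lam) *\<^sub>R g = 0"
begin

lemma stationary_diff:
  "(2 * lam) *\<^sub>R (f - g) = - (\<Sum>i\<in>I. (\<phi> i (inner f (k i)) - \<psi> i (inner g (k i))) *\<^sub>R k i)"
proof -
  have "(2 * lam) *\<^sub>R f = - (\<Sum>i\<in>I. \<phi> i (inner f (k i)) *\<^sub>R k i)"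
    "(2 * lam) *\<^sub>R g = - (\<Sum>i\<in>I. \<psi> i (inner g (k i)) *\<^sub>R k i)"
    using stationary_f stationary_g by (simp_all add: eq_neg_iff_add_eq_0 add.commute)
  then show ?thesis
    by (simp add: scaleR_diff_right scaleR_left_diff_distrib sum_subtractf)
qed

lemma reg_hessian_diff:
  "reg_hessian c k I lam (f - g) =
    (\<Sum>i\<in>I. (c i * inner (f - g) (k i) - (\<phi> i (inner f (k i)) - \<psi> i (inner g (k i)))) *\<^sub>R k i)"
  by (simp add: reg_hessian_def stationary_diff inner_commute scaleR_left_diff_distrib sum_subtractf)

lemma norm_diff_le:
  assumes mono: "\<And>i. i \<in> I \<Longrightarrow> mono (\<phi> i)"
  shows "norm (f - g) \<le> \<bar>\<phi> j (inner g (k j)) - \<psi> j (inner g (k j))\<bar> * norm (k j) / (2 * lam)"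
proof -
  define D where "D i = inner (f - g) (k i)" for i
  define a where "a = \<bar>\<phi> j (inner g (k j)) - \<psi> j (inner g (k j))\<bar>"
  have "inner ((2 * lam) *\<^sub>R (f - g)) (f - g)
      = - (\<Sum>i\<in>I. (\<phi> i (inner f (k i)) - \<psi> i (inner g (k i))) * D i)"
    unfolding stationary_diff by (simp add: inner_sum_left D_def inner_commute[of "k _"])
  then have "2 * lam * (norm (f - g))\<^sup>2 = - (\<Sum>i\<in>I. (\<phi> i (inner f (k i)) - \<psi> i (inner g (k i))) * D i)"
    by (simp add: power2_norm_eq_inner)
  moreover have "- (if i = j then a * \<bar>D i\<bar> else 0) \<le> (\<phi> i (inner f (k i)) - \<psi> i (inner g (k i))) * D i"
    if "i \<in> I" for i
  proof -
    have D: "D i = inner f (k i) - inner g (k i)"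
      by (simp add: D_def inner_diff_left)
    have monotone: "0 \<le> (\<phi> i (inner f (k i)) - \<phi> i (inner g (k i))) * D i"
      unfolding D by (rule mono_imp_diff_mult_nonneg[OF mono[OF that]])
    show ?thesis
    proof (cases "i = j")
      case True
      have "\<bar>(\<phi> j (inner g (k j)) - \<psi> j (inner g (k j))) * D i\<bar> = a * \<bar>D i\<bar>"
        by (simp add: a_def abs_mult)
      then have "- (a * \<bar>D i\<bar>) \<le> (\<phi> j (inner g (k j)) - \<psi> j (inner g (k j))) * D i"
        by linarith
      with monotone True show ?thesis
        by (simp add: algebra_simps)
    qed (use monotone agree[OF that] in simp)
  qed
  then have "- (a * \<bar>D j\<bar>) \<le> (\<Sum>i\<in>I. (\<phi> i (inner f (k i)) - \<psi> i (inner g (k i))) * D i)"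
    using sum_mono[of I "\<lambda>i. - (if i = j then a * \<bar>D i\<bar> else 0)"] finite_I j_in_I
    by (simp add: sum_negf)
  moreover have "a * \<bar>D j\<bar> \<le> a * norm (k j) * norm (f - g)"
    using Cauchy_Schwarz_ineq2[of "f - g" "k j"]
    by (auto simp: D_def a_def mult.assoc mult.commute[of "norm (k j)"] intro: mult_left_mono)
  ultimately have "2 * lam * (norm (f - g))\<^sup>2 \<le> a * norm (k j) * norm (f - g)"
    by linarith
  then show ?thesis
    using lam_pos by (intro le_divide_if_scaled_square_le) (simp_all add: a_def)
qed

definition newton_residual_coeff :: "(nat \<Rightarrow> real) \<Rightarrow> nat \<Rightarrow> real"
  where "newton_residual_coeff c i =
    c i * inner (f - g) (k i) - (\<phi> i (inner f (k i)) - \<psi> i (inner g (k i)))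
      - (if i = j then \<psi> j (inner g (k j)) - \<phi> j (inner g (k j)) else 0)"

lemma reg_hessian_newton_residual:
  assumes "reg_hessian c k I lam \<delta> = (\<psi> j (inner g (k j)) - \<phi> j (inner g (k j))) *\<^sub>R k j"
  shows "reg_hessian c k I lam (f - g - \<delta>) = (\<Sum>i\<in>I. newton_residual_coeff c i *\<^sub>R k i)"
proof -
  let ?s = "\<psi> j (inner g (k j)) - \<phi> j (inner g (k j))"
  have "(\<Sum>i\<in>I. (if i = j then ?s else 0) *\<^sub>R k i) = (\<Sum>i\<in>I. if i = j then ?s *\<^sub>R k i else 0)"
    by (rule sum.cong) auto
  also have "\<dots> = ?s *\<^sub>R k j"
    using finite_I j_in_I by simp
  finally have "(\<Sum>i\<in>I. (if i = j then ?s else 0) *\<^sub>R k i) = ?s *\<^sub>R k j" .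
  moreover have "reg_hessian c k I lam (f - g - \<delta>) = reg_hessian c k I lam (f - g) - ?s *\<^sub>R k j"
    by (simp add: linear_diff[OF linear_reg_hessian, where x = "f - g" and y = \<delta>] assms)
  ultimately show ?thesis
    by (simp add: reg_hessian_diff newton_residual_coeff_def scaleR_left_diff_distrib sum_subtractf)
qed

text \<open>Away from \<open>j\<close> the coefficient is minus a second-order Taylor remainder of \<open>\<phi> i\<close> at
  \<open>\<langle>g, k i\<rangle>\<close>; at \<open>j\<close> the mismatch between \<open>c j\<close> and the curvature of \<open>\<phi> j\<close> is added.\<close>

lemma abs_newton_residual_coeff_le:
  assumes deriv: "\<And>i t. i \<in> I \<Longrightarrow> (\<phi> i has_real_derivative \<phi>' i t) (at t)"
    and deriv2: "\<And>i t. i \<in> I \<Longrightarrow> (\<phi>' i has_real_derivative \<phi>'' i t) (at t)"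
    and deriv2_bound: "\<And>i t. i \<in> I \<Longrightarrow> \<bar>\<phi>'' i t\<bar> \<le> \<xi>"
    and c_eq: "\<And>i. i \<in> I \<Longrightarrow> i \<noteq> j \<Longrightarrow> c i = \<phi>' i (inner g (k i))"
    and i: "i \<in> I"
  shows "\<bar>newton_residual_coeff c i\<bar> \<le> \<xi> / 2 * (inner (f - g) (k i))\<^sup>2
    + (if i = j then \<bar>c j - \<phi>' j (inner g (k j))\<bar> * \<bar>inner (f - g) (k i)\<bar> else 0)"
proof -
  define D where "D = inner (f - g) (k i)"
  have D: "D = inner f (k i) - inner g (k i)"
    by (simp add: D_def inner_diff_left)
  define r where "r = \<phi> i (inner f (k i)) - \<phi> i (inner g (k i)) - \<phi>' i (inner g (k i)) * D"
  have "newton_residual_coeff c i = (c i - \<phi>' i (inner g (k i))) * D - r"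
    by (cases "i = j") (simp_all add: newton_residual_coeff_def r_def agree[OF i] algebra_simps D)
  then have "\<bar>newton_residual_coeff c i\<bar> \<le> \<bar>(c i - \<phi>' i (inner g (k i))) * D\<bar> + \<bar>r\<bar>"
    by (simp only: abs_triangle_ineq4)
  moreover have "\<bar>r\<bar> \<le> \<xi> / 2 * D\<^sup>2"
    unfolding r_def D by (rule taylor_remainder_le[OF deriv deriv2 deriv2_bound]) (use i in auto)
  moreover have "\<bar>(c i - \<phi>' i (inner g (k i))) * D\<bar>
      = (if i = j then \<bar>c j - \<phi>' j (inner g (k j))\<bar> * \<bar>D\<bar> else 0)"
    by (cases "i = j") (simp_all add: abs_mult c_eq[OF i])
  ultimately show ?thesis
    unfolding D_def by linarith
qed

lemma newton_step_error:
  assumes deriv: "\<And>i t. i \<in> I \<Longrightarrow> (\<phi> i has_real_derivative \<phi>' i t) (at t)"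
    and deriv2: "\<And>i t. i \<in> I \<Longrightarrow> (\<phi>' i has_real_derivative \<phi>'' i t) (at t)"
    and deriv2_bound: "\<And>i t. i \<in> I \<Longrightarrow> \<bar>\<phi>'' i t\<bar> \<le> \<xi>"
    and c_eq: "\<And>i. i \<in> I \<Longrightarrow> i \<noteq> j \<Longrightarrow> c i = \<phi>' i (inner g (k i))"
    and c_nonneg: "\<And>i. i \<in> I \<Longrightarrow> 0 \<le> c i"
    and newton: "reg_hessian c k I lam \<delta> = (\<psi> j (inner g (k j)) - \<phi> j (inner g (k j))) *\<^sub>R k j"
  shows "norm (f - g - \<delta>) \<le> (\<xi> / 2 * (norm (f - g))\<^sup>2 * (\<Sum>i\<in>I. norm (k i) ^ 3)
      + \<bar>c j - \<phi>' j (inner g (k j))\<bar> * (norm (k j))\<^sup>2 * norm (f - g)) / (2 * lam)"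
proof -
  define e where "e = \<bar>c j - \<phi>' j (inner g (k j))\<bar>"
  define d where "d = norm (f - g)"
  have "norm (reg_hessian c k I lam (f - g - \<delta>)) \<le> (\<Sum>i\<in>I. \<bar>newton_residual_coeff c i\<bar> * norm (k i))"
    using norm_sum[of "\<lambda>i. newton_residual_coeff c i *\<^sub>R k i" I]
    by (simp add: reg_hessian_newton_residual[OF newton])
  also have "\<dots> \<le> (\<Sum>i\<in>I.
      (\<xi> / 2 * (norm (k i) * d)\<^sup>2 + (if i = j then e * (norm (k i) * d) else 0)) * norm (k i))"
  proof (rule sum_mono, rule mult_right_mono)
    fix i
    assume i: "i \<in> I"
    have D_le: "\<bar>inner (f - g) (k i)\<bar> \<le> norm (k i) * d"
      using Cauchy_Schwarz_ineq2[of "f - g" "k i"] by (simp add: d_def mult.commute)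
    have "\<bar>newton_residual_coeff c i\<bar> \<le> \<xi> / 2 * (inner (f - g) (k i))\<^sup>2
        + (if i = j then e * \<bar>inner (f - g) (k i)\<bar> else 0)"
      unfolding e_def by (rule abs_newton_residual_coeff_le[OF deriv deriv2 deriv2_bound c_eq i])
    also have "\<dots> \<le> \<xi> / 2 * (norm (k i) * d)\<^sup>2 + (if i = j then e * (norm (k i) * d) else 0)"
    proof (intro add_mono mult_left_mono)
      show "(inner (f - g) (k i))\<^sup>2 \<le> (norm (k i) * d)\<^sup>2"
        using power_mono[OF D_le abs_ge_zero, of 2] by simp
      show "0 \<le> \<xi> / 2"
        using deriv2_bound[OF i, of 0] by simp
    qed (use D_le in \<open>auto simp: e_def intro: mult_left_mono\<close>)
    finally show "\<bar>newton_residual_coeff c i\<bar> \<le> \<dots>" .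
  qed simp
  also have "\<dots> = (\<Sum>i\<in>I. \<xi> / 2 * (norm (k i) * d)\<^sup>2 * norm (k i))
      + (\<Sum>i\<in>I. if i = j then e * (norm (k i) * d) * norm (k i) else 0)"
    by (simp add: distrib_right sum.distrib if_distrib[of "\<lambda>x. x * _"] cong: if_cong)
  also have "\<dots> = \<xi> / 2 * d\<^sup>2 * (\<Sum>i\<in>I. norm (k i) ^ 3) + e * (norm (k j))\<^sup>2 * d"
    using finite_I j_in_I by (simp add: sum_distrib_left power2_eq_square power3_eq_cube mult_ac)
  finally have "norm (reg_hessian c k I lam (f - g - \<delta>)) / (2 * lam)
      \<le> (\<xi> / 2 * d\<^sup>2 * (\<Sum>i\<in>I. norm (k i) ^ 3) + e * (norm (k j))\<^sup>2 * d) / (2 * lam)"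
    using lam_pos by (simp add: divide_right_mono)
  then show ?thesis
    using norm_le_reg_hessian[where c = c and I = I and k = k and h = "f - g - \<delta>", OF c_nonneg lam_pos]
    by (simp add: d_def e_def)
qed

end

section \<open>Kernel ridge regression with a changed label\<close>

lemma krr_obj_eq_reg_risk:
  "krr_obj Kx loss lam n X Y w f =
    reg_risk (\<lambda>i t. loss ((Y(Suc n := w)) i) t / real (Suc n)) (\<lambda>i. Kx (X i)) {1..Suc n} lam f"
proof -
  have "(\<Sum>i = 1..n. loss (Y i) (eval_at Kx f (X i)))
      = (\<Sum>i = 1..n. loss ((Y(Suc n := w)) i) (inner f (Kx (X i))))"
    by (intro sum.cong) (auto simp: eval_at_def)
  then show ?thesis
    by (simp add: krr_obj_def reg_risk_def eval_at_def sum_divide_distrib add_divide_distrib)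
qed

lemma hess_op_eq_reg_hessian:
  "hess_op Kx l2 lam n X Y z f =
    reg_hessian (\<lambda>i. l2 ((Y(Suc n := z)) i) (inner f (Kx (X i))) / real (Suc n)) (\<lambda>i. Kx (X i))
      {1..Suc n} lam"
  (is "_ = ?H")
proof
  fix h
  have "(\<Sum>i = 1..n. (l2 (Y i) (eval_at Kx f (X i)) * inner (Kx (X i)) h) *\<^sub>R Kx (X i))
      = (\<Sum>i = 1..n. (l2 ((Y(Suc n := z)) i) (inner f (Kx (X i))) * inner (Kx (X i)) h) *\<^sub>R Kx (X i))"
    by (intro sum.cong) (auto simp: eval_at_def)
  then show "hess_op Kx l2 lam n X Y z f h = ?H h"
    by (simp add: hess_op_def reg_hessian_def eval_at_def scaleR_sum_right scaleR_add_right)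
qed

lemma f_IF_eq_newton_step:
  assumes "g = krr_min Kx loss lam n X Y z" and "u = inner g (Kx (X (Suc n)))"
  shows "f_IF Kx loss l1 l2 lam n X Y z y =
    g + ((l1 z u - l1 y u) / real (Suc n)) *\<^sub>R hess_pinv Kx l2 lam n X Y z g (Kx (X (Suc n)))"
  using assms
  by (simp add: f_IF_def infl_def eval_at_def Let_def algebra_simps diff_divide_distrib scaleR_diff_left)

lemma power2_powr_three_halves:
  fixes x :: real
  assumes "0 \<le> x"
  shows "(x\<^sup>2) powr (3/2) = x ^ 3"
proof (cases "x = 0")
  case False
  with assms have "0 < x"
    by simp
  then have "(x\<^sup>2) powr (3/2) = (x powr 2) powr (3/2)"
    by (simp add: powr_realpow)
  also have "\<dots> = x powr 3"
    by (simp add: powr_powr)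
  also have "\<dots> = x ^ 3"
    using \<open>0 < x\<close> by (simp add: powr_realpow)
  finally show ?thesis .
qed simp

lemma kmat_diag: "kmat Kx X i i = (norm (Kx (X i)))\<^sup>2"
  by (simp add: kmat_def power2_norm_eq_inner)

lemma newton_error_arith:
  fixes lam N \<xi> \<beta> S Q r r' d :: real
  assumes "0 < lam" "0 < N" "0 \<le> \<xi>" "0 \<le> \<beta>" "0 \<le> S" "0 \<le> Q" "0 \<le> d"
    and "d \<le> r * Q / (lam * N)" and "0 \<le> r" and "r \<le> r'"
  shows "(\<xi> / N / 2 * d\<^sup>2 * S + \<beta> / N * Q\<^sup>2 * d) / (2 * lam)
    \<le> Q * (\<xi> / 2 * Q * (S / N) * r'\<^sup>2 + 2 * lam * Q\<^sup>2 * \<beta> * r') / (lam ^ 3 * N\<^sup>2)"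
proof -
  define D where "D = r' * Q / (lam * N)"
  have "r * Q / (lam * N) \<le> D"
    unfolding D_def using assms by (intro divide_right_mono mult_right_mono) auto
  with assms have "d \<le> D"
    by linarith
  define A where "A = \<xi> * S * Q\<^sup>2 * r'\<^sup>2 / (4 * lam ^ 3 * N ^ 3)"
  define B where "B = \<beta> * Q ^ 3 * r' / (2 * lam\<^sup>2 * N\<^sup>2)"
  have "0 \<le> r'"
    using assms by linarith
  have "(\<xi> / N / 2 * d\<^sup>2 * S + \<beta> / N * Q\<^sup>2 * d) / (2 * lam)
      \<le> (\<xi> / N / 2 * D\<^sup>2 * S + \<beta> / N * Q\<^sup>2 * D) / (2 * lam)"
    using assms \<open>d \<le> D\<close>
    by (intro divide_right_mono add_mono mult_right_mono mult_left_mono power_mono) auto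
  also have "\<dots> = A + B"
    using assms(1,2) by (simp add: A_def B_def D_def field_simps power2_eq_square power3_eq_cube)
  also have "\<dots> \<le> 2 * A + 4 * B"
    using assms \<open>0 \<le> r'\<close> unfolding A_def B_def
    by (intro add_mono) (simp_all add: field_simps)
  also have "\<dots> = Q * (\<xi> / 2 * Q * (S / N) * r'\<^sup>2 + 2 * lam * Q\<^sup>2 * \<beta> * r') / (lam ^ 3 * N\<^sup>2)"
    using assms(1,2) by (simp add: A_def B_def field_simps power2_eq_square power3_eq_cube)
  finally show ?thesis .
qed

lemma rho1_eq:
  "rho1 Kx loss l1 lam n X Y z y =
    \<bar>l1 y (inner (krr_min Kx loss lam n X Y z) (Kx (X (Suc n))))
      - l1 z (inner (krr_min Kx loss lam n X Y z) (Kx (X (Suc n))))\<bar> / 2"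
  by (simp add: rho1_def eval_at_def Let_def)

lemma rho1_le_rho1t:
  assumes "0 \<le> \<beta>" and "0 < lam"
  shows "rho1 Kx loss l1 lam n X Y z y \<le> rho1t Kx loss l1 \<beta> lam n X Y z y"
proof -
  have "0 \<le> kmat Kx X (Suc n) (Suc n) * \<beta> / (lam * real (n + 1))"
    using assms by (simp add: kmat_diag)
  moreover have "0 \<le> rho1 Kx loss l1 lam n X Y z y"
    by (simp add: rho1_def Let_def)
  ultimately show ?thesis
    using mult_nonneg_nonneg by (fastforce simp: rho1t_def distrib_right)
qed

lemma rho2_eq:
  "rho2 Kx loss l1 \<beta> \<xi> lam n X Y z y =
    \<xi> / 2 * norm (Kx (X (Suc n))) * ((\<Sum>i = 1..Suc n. norm (Kx (X i)) ^ 3) / real (Suc n))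
      * (rho1t Kx loss l1 \<beta> lam n X Y z y)\<^sup>2
    + 2 * lam * (norm (Kx (X (Suc n))))\<^sup>2 * \<beta> * rho1t Kx loss l1 \<beta> lam n X Y z y"
  by (simp add: rho2_def kmat_diag power2_powr_three_halves Let_def)

lemma lipschitz_eval_at_diff_le:
  assumes "\<gamma>-lipschitz_on UNIV \<sigma>"
  shows "\<bar>\<sigma> (eval_at Kx f x) - \<sigma> (eval_at Kx h x)\<bar> \<le> \<gamma> * norm (f - h) * norm (Kx x)"
proof -
  have "\<bar>\<sigma> (eval_at Kx f x) - \<sigma> (eval_at Kx h x)\<bar> \<le> \<gamma> * \<bar>inner (f - h) (Kx x)\<bar>"
    using lipschitz_onD[OF assms, of "eval_at Kx f x" "eval_at Kx h x"]
    by (simp add: dist_real_def eval_at_def inner_diff_left)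
  also have "\<dots> \<le> \<gamma> * (norm (f - h) * norm (Kx x))"
    using lipschitz_on_nonneg[OF assms] Cauchy_Schwarz_ineq2 by (rule mult_left_mono[rotated])
  finally show ?thesis
    by (simp add: mult.assoc)
qed

text \<open>The labels of \<open>D\<^sup>w\<close> are \<open>Y(Suc n := w)\<close>, indexed by \<open>{1..Suc n}\<close>.\<close>

locale krr_label_change =
  fixes Kx :: "'x \<Rightarrow> 'h::{real_inner, complete_space}" and \<Y> :: "real set"
    and X :: "nat \<Rightarrow> 'x" and Y :: "nat \<Rightarrow> real" and n :: nat and lam :: real
    and loss l1 l2 l3 :: "real \<Rightarrow> real \<Rightarrow> real" and \<beta> \<xi> :: real
  assumes Y_in: "\<forall>i \<in> {1..n}. Y i \<in> \<Y>"
    and lam_pos: "lam > 0"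
    and convex: "\<forall>y \<in> \<Y>. convex_on UNIV (loss y)"
    and d1: "\<forall>y \<in> \<Y>. \<forall>u. (loss y has_real_derivative l1 y u) (at u)"
    and d2: "\<forall>y \<in> \<Y>. \<forall>u. (l1 y has_real_derivative l2 y u) (at u)"
    and d3: "\<forall>y \<in> \<Y>. \<forall>u. (l2 y has_real_derivative l3 y u) (at u)"
    and lip_l1: "\<forall>y \<in> \<Y>. \<beta>-lipschitz_on UNIV (l1 y)"
    and bnd_l3: "\<forall>y \<in> \<Y>. \<forall>u. \<bar>l3 y u\<bar> \<le> \<xi>"
begin

lemma label_in: "w \<in> \<Y> \<Longrightarrow> i \<in> {1..Suc n} \<Longrightarrow> (Y(Suc n := w)) i \<in> \<Y>"
  using Y_in by auto

lemma l1_mono: "w \<in> \<Y> \<Longrightarrow> mono (l1 w)"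
  using convex_on_deriv_mono[of "loss w" "l1 w"] convex d1 by simp

lemma l2_nonneg: "w \<in> \<Y> \<Longrightarrow> 0 \<le> l2 w t"
  using convex_on_second_deriv_nonneg[of "loss w" "l1 w" "l2 w"] convex d1 d2 by simp

lemma l2_le: "w \<in> \<Y> \<Longrightarrow> l2 w t \<le> \<beta>"
  using lipschitz_on_deriv_bound[of \<beta> "l1 w" "l2 w t" t] lip_l1 d2 by simp

lemma krr_min_stationary:
  assumes "w \<in> \<Y>"
  shows "(\<Sum>i\<in>{1..Suc n}. (l1 ((Y(Suc n := w)) i) (inner (krr_min Kx loss lam n X Y w) (Kx (X i)))
      / real (Suc n)) *\<^sub>R Kx (X i)) + (2 * lam) *\<^sub>R krr_min Kx loss lam n X Y w = 0"
proof -
  define \<phi> where "\<phi> i t = loss ((Y(Suc n := w)) i) t / real (Suc n)" for i t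
  define \<phi>' where "\<phi>' i t = l1 ((Y(Suc n := w)) i) t / real (Suc n)" for i t
  have deriv: "(\<phi> i has_real_derivative \<phi>' i t) (at t)" if "i \<in> {1..Suc n}" for i t
    unfolding \<phi>_def \<phi>'_def by (rule DERIV_cdivide) (use d1 label_in[OF assms that] in blast)
  have "convex_on UNIV (\<phi> i)" if "i \<in> {1..Suc n}" for i
    unfolding \<phi>_def by (rule convex_on_cdiv) (use convex label_in[OF assms that] in auto)
  then have "\<exists>f. \<forall>h. reg_risk \<phi> (\<lambda>i. Kx (X i)) {1..Suc n} lam f
      \<le> reg_risk \<phi> (\<lambda>i. Kx (X i)) {1..Suc n} lam h"
    by (intro reg_risk_has_minimizer[where \<phi>' = \<phi>' and I = "{1..Suc n}", OF lam_pos] deriv) auto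
  then have "\<exists>f. \<forall>h. krr_obj Kx loss lam n X Y w f \<le> krr_obj Kx loss lam n X Y w h"
    by (simp only: krr_obj_eq_reg_risk \<phi>_def[abs_def])
  then have "\<forall>h. krr_obj Kx loss lam n X Y w (krr_min Kx loss lam n X Y w)
      \<le> krr_obj Kx loss lam n X Y w h"
    unfolding krr_min_def by (rule someI_ex)
  then have "reg_risk \<phi> (\<lambda>i. Kx (X i)) {1..Suc n} lam (krr_min Kx loss lam n X Y w)
      \<le> reg_risk \<phi> (\<lambda>i. Kx (X i)) {1..Suc n} lam h" for h
    by (simp only: krr_obj_eq_reg_risk \<phi>_def[abs_def])
  then have "(\<Sum>i\<in>{1..Suc n}. \<phi>' i (inner (krr_min Kx loss lam n X Y w) (Kx (X i))) *\<^sub>R Kx (X i))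
      + (2 * lam) *\<^sub>R krr_min Kx loss lam n X Y w = 0"
    by (intro reg_risk_minimizer_stationary[where \<phi> = \<phi>] deriv) blast
  then show ?thesis
    by (simp only: \<phi>'_def)
qed

lemma stationary_pair_krr_min:
  assumes "z \<in> \<Y>" and "y \<in> \<Y>"
  shows "stationary_pair (\<lambda>i. Kx (X i)) {1..Suc n} (Suc n) lam
    (\<lambda>i t. l1 ((Y(Suc n := y)) i) t / real (Suc n)) (\<lambda>i t. l1 ((Y(Suc n := z)) i) t / real (Suc n))
    (krr_min Kx loss lam n X Y y) (krr_min Kx loss lam n X Y z)"
  by unfold_locales (use lam_pos krr_min_stationary[OF assms(1)] krr_min_stationary[OF assms(2)] in auto)

lemma hess_pinv_solves:
  assumes "z \<in> \<Y>"
  shows "reg_hessian (\<lambda>i. l2 ((Y(Suc n := z)) i) (inner g (Kx (X i))) / real (Suc n)) (\<lambda>i. Kx (X i))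
    {1..Suc n} lam (hess_pinv Kx l2 lam n X Y z g (Kx (X (Suc n)))) = Kx (X (Suc n))"
proof -
  define c where "c i = l2 ((Y(Suc n := z)) i) (inner g (Kx (X i))) / real (Suc n)" for i
  define k where "k i = Kx (X i)" for i
  have c_nonneg: "0 \<le> c i" if "i \<in> {1..Suc n}" for i
    using l2_nonneg[OF label_in[OF assms that]] by (simp add: c_def)
  obtain a where "a \<in> span (k ` {1..Suc n})" and a: "reg_hessian c k {1..Suc n} lam a = k (Suc n)"
    using reg_hessian_solvable[where I = "{1..Suc n}" and j = "Suc n" and c = c and k = k,
        OF _ _ lam_pos c_nonneg]
    by auto
  moreover have "b = a" if "reg_hessian c k {1..Suc n} lam b = k (Suc n)" for b
    using reg_hessian_eq_iff[where I = "{1..Suc n}" and c = c and k = k and a = b and b = a,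
        OF c_nonneg lam_pos] that a
    by simp
  ultimately have "\<exists>!a. a \<in> span (k ` {1..Suc n}) \<and> reg_hessian c k {1..Suc n} lam a = k (Suc n)"
    by blast
  then have "\<exists>!a. a \<in> span_A Kx n X \<and> hess_op Kx l2 lam n X Y z g a = Kx (X (Suc n))"
    by (simp add: span_A_def hess_op_eq_reg_hessian c_def[abs_def] k_def[abs_def])
  then show ?thesis
    unfolding hess_pinv_def hess_op_eq_reg_hessian by (rule theI'[THEN conjunct2])
qed

lemma influence_newton_step:
  assumes "z \<in> \<Y>" "y \<in> \<Y>"
  defines "g \<equiv> krr_min Kx loss lam n X Y z"
  obtains \<delta> where "f_IF Kx loss l1 l2 lam n X Y z y = g + \<delta>"
    and "reg_hessian (\<lambda>i. l2 ((Y(Suc n := z)) i) (inner g (Kx (X i))) / real (Suc n)) (\<lambda>i. Kx (X i))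
      {1..Suc n} lam \<delta> = ((l1 z (inner g (Kx (X (Suc n)))) - l1 y (inner g (Kx (X (Suc n))))) / real (Suc n))
        *\<^sub>R Kx (X (Suc n))"
    and "norm \<delta> \<le> rho1 Kx loss l1 lam n X Y z y * norm (Kx (X (Suc n))) / (lam * real (Suc n))"
proof -
  let ?c = "\<lambda>i. l2 ((Y(Suc n := z)) i) (inner g (Kx (X i))) / real (Suc n)"
  let ?s = "(l1 z (inner g (Kx (X (Suc n)))) - l1 y (inner g (Kx (X (Suc n))))) / real (Suc n)"
  define p where "p = hess_pinv Kx l2 lam n X Y z g (Kx (X (Suc n)))"
  have Hp: "reg_hessian ?c (\<lambda>i. Kx (X i)) {1..Suc n} lam p = Kx (X (Suc n))"
    unfolding p_def by (rule hess_pinv_solves[OF assms(1)])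
  have "norm p \<le> norm (Kx (X (Suc n))) / (2 * lam)"
    using norm_le_reg_hessian[where c = ?c and I = "{1..Suc n}" and k = "\<lambda>i. Kx (X i)" and h = p
        and lam = lam] Hp lam_pos l2_nonneg[OF label_in[OF assms(1)]]
    by simp
  have "norm (?s *\<^sub>R p) = 2 * rho1 Kx loss l1 lam n X Y z y / real (Suc n) * norm p"
    by (simp add: rho1_eq g_def abs_minus_commute)
  also have "\<dots> \<le> 2 * rho1 Kx loss l1 lam n X Y z y / real (Suc n) * (norm (Kx (X (Suc n))) / (2 * lam))"
    using \<open>norm p \<le> _\<close> by (intro mult_left_mono) (simp_all add: rho1_eq)
  also have "\<dots> = rho1 Kx loss l1 lam n X Y z y * norm (Kx (X (Suc n))) / (lam * real (Suc n))"
    by simp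
  finally have "norm (?s *\<^sub>R p)
      \<le> rho1 Kx loss l1 lam n X Y z y * norm (Kx (X (Suc n))) / (lam * real (Suc n))" .
  moreover have "reg_hessian ?c (\<lambda>i. Kx (X i)) {1..Suc n} lam (?s *\<^sub>R p) = ?s *\<^sub>R Kx (X (Suc n))"
    by (simp only: linear_scale[OF linear_reg_hessian] Hp)
  moreover have "f_IF Kx loss l1 l2 lam n X Y z y = g + ?s *\<^sub>R p"
    unfolding p_def by (rule f_IF_eq_newton_step) (simp_all add: g_def)
  ultimately show ?thesis
    using that by blast
qed

lemma norm_krr_min_diff_le:
  assumes "z \<in> \<Y>" "y \<in> \<Y>"
  shows "norm (krr_min Kx loss lam n X Y y - krr_min Kx loss lam n X Y z)
    \<le> rho1 Kx loss l1 lam n X Y z y * norm (Kx (X (Suc n))) / (lam * real (Suc n))"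
proof -
  interpret stationary_pair "\<lambda>i. Kx (X i)" "{1..Suc n}" "Suc n" lam
    "\<lambda>i t. l1 ((Y(Suc n := y)) i) t / real (Suc n)" "\<lambda>i t. l1 ((Y(Suc n := z)) i) t / real (Suc n)"
    "krr_min Kx loss lam n X Y y" "krr_min Kx loss lam n X Y z"
    by (rule stationary_pair_krr_min[OF assms])
  have "mono (\<lambda>t. l1 ((Y(Suc n := y)) i) t / real (Suc n))" if "i \<in> {1..Suc n}" for i
    using l1_mono[OF label_in[OF assms(2) that]] by (simp add: mono_def divide_right_mono)
  then have "norm (krr_min Kx loss lam n X Y y - krr_min Kx loss lam n X Y z)
      \<le> \<bar>l1 y (inner (krr_min Kx loss lam n X Y z) (Kx (X (Suc n)))) / real (Suc n)
        - l1 z (inner (krr_min Kx loss lam n X Y z) (Kx (X (Suc n)))) / real (Suc n)\<bar>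
        * norm (Kx (X (Suc n))) / (2 * lam)"
    using norm_diff_le by simp
  also have "\<dots> = rho1 Kx loss l1 lam n X Y z y * norm (Kx (X (Suc n))) / (lam * real (Suc n))"
    unfolding rho1_eq diff_divide_distrib[symmetric] abs_divide by simp
  finally show ?thesis .
qed

lemma norm_krr_min_diff_f_IF_le_rho1:
  assumes "z \<in> \<Y>" "y \<in> \<Y>"
  shows "norm (krr_min Kx loss lam n X Y y - f_IF Kx loss l1 l2 lam n X Y z y)
    \<le> 2 * rho1 Kx loss l1 lam n X Y z y * norm (Kx (X (Suc n))) / (lam * real (Suc n))"
proof -
  obtain \<delta> where fIF: "f_IF Kx loss l1 l2 lam n X Y z y = krr_min Kx loss lam n X Y z + \<delta>"
    and \<delta>: "norm \<delta> \<le> rho1 Kx loss l1 lam n X Y z y * norm (Kx (X (Suc n))) / (lam * real (Suc n))"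
    using influence_newton_step[OF assms] by blast
  have "norm (krr_min Kx loss lam n X Y y - f_IF Kx loss l1 l2 lam n X Y z y)
      \<le> norm (krr_min Kx loss lam n X Y y - krr_min Kx loss lam n X Y z) + norm \<delta>"
    unfolding fIF by (rule order_trans[OF _ norm_triangle_ineq4]) (simp add: algebra_simps)
  with norm_krr_min_diff_le[OF assms] \<delta> show ?thesis
    by simp
qed

lemma norm_krr_min_diff_f_IF_le_quadratic:
  assumes z: "z \<in> \<Y>" and y: "y \<in> \<Y>"
  defines "d \<equiv> norm (krr_min Kx loss lam n X Y y - krr_min Kx loss lam n X Y z)"
  shows "norm (krr_min Kx loss lam n X Y y - f_IF Kx loss l1 l2 lam n X Y z y)
    \<le> (\<xi> / real (Suc n) / 2 * d\<^sup>2 * (\<Sum>i = 1..Suc n. norm (Kx (X i)) ^ 3)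
        + \<beta> / real (Suc n) * (norm (Kx (X (Suc n))))\<^sup>2 * d) / (2 * lam)"
proof -
  define N where "N = real (Suc n)"
  define f where "f = krr_min Kx loss lam n X Y y"
  define g where "g = krr_min Kx loss lam n X Y z"
  define u where "u = inner g (Kx (X (Suc n)))"
  define q where "q = norm (Kx (X (Suc n)))"
  define S where "S = (\<Sum>i = 1..Suc n. norm (Kx (X i)) ^ 3)"
  interpret stationary_pair "\<lambda>i. Kx (X i)" "{1..Suc n}" "Suc n" lam
    "\<lambda>i t. l1 ((Y(Suc n := y)) i) t / N" "\<lambda>i t. l1 ((Y(Suc n := z)) i) t / N" f g
    unfolding N_def f_def g_def by (rule stationary_pair_krr_min[OF z y])
  obtain \<delta> where fIF: "f_IF Kx loss l1 l2 lam n X Y z y = g + \<delta>"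
    and newton: "reg_hessian (\<lambda>i. l2 ((Y(Suc n := z)) i) (inner g (Kx (X i))) / N) (\<lambda>i. Kx (X i))
      {1..Suc n} lam \<delta> = ((l1 z u - l1 y u) / N) *\<^sub>R Kx (X (Suc n))"
    using influence_newton_step[OF z y] unfolding N_def g_def u_def by blast
  have "norm (f - g - \<delta>) \<le> (\<xi> / N / 2 * (norm (f - g))\<^sup>2 * S
      + \<bar>l2 ((Y(Suc n := z)) (Suc n)) u / N - l2 ((Y(Suc n := y)) (Suc n)) u / N\<bar> * q\<^sup>2 * norm (f - g))
      / (2 * lam)"
    unfolding S_def q_def u_def
  proof (rule newton_step_error[where \<phi>' = "\<lambda>i t. l2 ((Y(Suc n := y)) i) t / N"
        and \<phi>'' = "\<lambda>i t. l3 ((Y(Suc n := y)) i) t / N" and \<xi> = "\<xi> / N"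
        and c = "\<lambda>i. l2 ((Y(Suc n := z)) i) (inner g (Kx (X i))) / N"])
    fix i t
    assume i: "i \<in> {1..Suc n}"
    show "((\<lambda>t. l1 ((Y(Suc n := y)) i) t / N) has_real_derivative l2 ((Y(Suc n := y)) i) t / N) (at t)"
      "((\<lambda>t. l2 ((Y(Suc n := y)) i) t / N) has_real_derivative l3 ((Y(Suc n := y)) i) t / N) (at t)"
      using d2 d3 label_in[OF y i] by (auto intro!: DERIV_cdivide)
    show "\<bar>l3 ((Y(Suc n := y)) i) t / N\<bar> \<le> \<xi> / N"
      using bnd_l3 label_in[OF y i] by (simp add: N_def abs_divide divide_right_mono)
    show "0 \<le> l2 ((Y(Suc n := z)) i) (inner g (Kx (X i))) / N"
      using l2_nonneg[OF label_in[OF z i]] by (simp add: N_def)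
  qed (use newton in \<open>simp_all add: diff_divide_distrib u_def\<close>)
  also have "\<dots> \<le> (\<xi> / N / 2 * (norm (f - g))\<^sup>2 * S + \<beta> / N * q\<^sup>2 * norm (f - g)) / (2 * lam)"
  proof -
    have curvature_change: "\<bar>l2 z u / N - l2 y u / N\<bar> \<le> \<beta> / N"
      using l2_nonneg[OF z, of u] l2_nonneg[OF y, of u] l2_le[OF z, of u] l2_le[OF y, of u]
      by (simp add: N_def abs_le_iff divide_right_mono flip: diff_divide_distrib)
    have "\<bar>l2 z u / N - l2 y u / N\<bar> * q\<^sup>2 * norm (f - g) \<le> \<beta> / N * q\<^sup>2 * norm (f - g)"
      using mult_right_mono[OF mult_right_mono[OF curvature_change, of "q\<^sup>2"], of "norm (f - g)"] by simp
    then show ?thesis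
      unfolding fun_upd_same by (rule divide_right_mono[OF add_left_mono]) (use lam_pos in simp)
  qed
  finally show ?thesis
    by (simp add: fIF d_def f_def g_def q_def N_def S_def algebra_simps)
qed

lemma norm_krr_min_diff_f_IF_le_rho2:
  assumes z: "z \<in> \<Y>" and y: "y \<in> \<Y>"
  shows "norm (krr_min Kx loss lam n X Y y - f_IF Kx loss l1 l2 lam n X Y z y)
    \<le> norm (Kx (X (Suc n))) * rho2 Kx loss l1 \<beta> \<xi> lam n X Y z y / (lam ^ 3 * (real (Suc n))\<^sup>2)"
proof -
  have "0 \<le> \<xi>" and "0 \<le> \<beta>"
    using bnd_l3 lip_l1 y by (auto intro: order_trans[OF abs_ge_zero] lipschitz_on_nonneg)
  show ?thesis
    unfolding rho2_eq
  proof (rule order_trans[OF norm_krr_min_diff_f_IF_le_quadratic[OF z y] newton_error_arith])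
    show "rho1 Kx loss l1 lam n X Y z y \<le> rho1t Kx loss l1 \<beta> lam n X Y z y"
      using \<open>0 \<le> \<beta>\<close> lam_pos by (rule rho1_le_rho1t)
  qed (use lam_pos \<open>0 \<le> \<xi>\<close> \<open>0 \<le> \<beta>\<close> norm_krr_min_diff_le[OF z y] in
      \<open>simp_all add: rho1_def Let_def sum_nonneg\<close>)
qed

lemma norm_krr_min_diff_f_IF_le_tau2:
  assumes z: "z \<in> \<Y>" and y: "y \<in> \<Y>" and "0 \<le> \<gamma>"
  shows "\<gamma> * norm (krr_min Kx loss lam n X Y y - f_IF Kx loss l1 l2 lam n X Y z y) * norm (Kx (X i))
    \<le> tau2 Kx loss l1 \<beta> \<xi> \<gamma> lam n X Y z i y"
proof -
  let ?e = "\<gamma> * norm (krr_min Kx loss lam n X Y y - f_IF Kx loss l1 l2 lam n X Y z y)"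
  let ?a = "\<gamma> * rho2 Kx loss l1 \<beta> \<xi> lam n X Y z y / (lam ^ 3 * (real (n + 1))\<^sup>2)"
  let ?b = "2 * \<gamma> * rho1 Kx loss l1 lam n X Y z y / (lam * real (n + 1))"
  have "?e \<le> norm (Kx (X (Suc n))) * ?a" "?e \<le> norm (Kx (X (Suc n))) * ?b"
    using mult_left_mono[OF norm_krr_min_diff_f_IF_le_rho2[OF z y] \<open>0 \<le> \<gamma>\<close>]
      mult_left_mono[OF norm_krr_min_diff_f_IF_le_rho1[OF z y] \<open>0 \<le> \<gamma>\<close>]
    by (simp_all add: mult_ac)
  then have "?e \<le> norm (Kx (X (Suc n))) * min ?a ?b"
    by (simp only: min_mult_distrib_left norm_ge_zero if_True min.bounded_iff)
  from mult_right_mono[OF this norm_ge_zero[of "Kx (X i)"]] show ?thesis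
    by (simp add: tau2_def kmat_diag mult_ac)
qed

end

theorem theorem21:
  fixes Kx :: "real^'d \<Rightarrow> 'h::{real_inner, complete_space}"
    and \<X> :: "(real^'d) set" and \<Y> :: "real set"
    and X :: "nat \<Rightarrow> real^'d" and Y :: "nat \<Rightarrow> real"
    and n :: nat and lam :: real and z :: real
    and loss l1 l2 l3 :: "real \<Rightarrow> real \<Rightarrow> real"
    and s :: "real \<Rightarrow> real \<Rightarrow> real"
    and \<beta> \<xi> \<gamma> :: real
  assumes rkhs: "closure (span (range Kx)) = UNIV"
    and X_in: "\<forall>i \<in> {1..Suc n}. X i \<in> \<X>"
    and Y_in: "\<forall>i \<in> {1..n}. Y i \<in> \<Y>"
    and z_in: "z \<in> \<Y>"
    and lam_pos: "lam > 0"
    and convex: "\<forall>y \<in> \<Y>. convex_on UNIV (loss y)"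
    and d1: "\<forall>y \<in> \<Y>. \<forall>u. (loss y has_real_derivative l1 y u) (at u)"
    and d2: "\<forall>y \<in> \<Y>. \<forall>u. (l1 y has_real_derivative l2 y u) (at u)"
    and d3: "\<forall>y \<in> \<Y>. \<forall>u. (l2 y has_real_derivative l3 y u) (at u)"
    and lip_l1: "\<forall>y \<in> \<Y>. \<beta>-lipschitz_on UNIV (l1 y)"
    and bnd_l3: "\<forall>y \<in> \<Y>. \<forall>u. \<bar>l3 y u\<bar> \<le> \<xi>"
    and s_nonneg: "\<forall>y u. s y u \<ge> 0"
    and lip_s: "\<forall>y \<in> \<Y>. \<gamma>-lipschitz_on UNIV (s y)"
    and y_in: "y \<in> \<Y>"
  shows "(\<forall>i \<in> {1..n}.
            \<bar>s (Y i) (eval_at Kx (krr_min Kx loss lam n X Y y) (X i))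
             - s (Y i) (eval_at Kx (f_IF Kx loss l1 l2 lam n X Y z y) (X i))\<bar>
            \<le> tau2 Kx loss l1 \<beta> \<xi> \<gamma> lam n X Y z i y)
       \<and> \<bar>s y (eval_at Kx (krr_min Kx loss lam n X Y y) (X (Suc n)))
            - s y (eval_at Kx (f_IF Kx loss l1 l2 lam n X Y z y) (X (Suc n)))\<bar>
         \<le> tau2 Kx loss l1 \<beta> \<xi> \<gamma> lam n X Y z (Suc n) y"
proof -
  interpret krr_label_change Kx \<Y> X Y n lam loss l1 l2 l3 \<beta> \<xi>
    using assms by unfold_locales
  have "\<bar>s w (eval_at Kx (krr_min Kx loss lam n X Y y) (X i))
      - s w (eval_at Kx (f_IF Kx loss l1 l2 lam n X Y z y) (X i))\<bar>
      \<le> tau2 Kx loss l1 \<beta> \<xi> \<gamma> lam n X Y z i y" if "w \<in> \<Y>" for w i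
  proof -
    have lip: "\<gamma>-lipschitz_on UNIV (s w)"
      using lip_s that by blast
    show ?thesis
      using lipschitz_eval_at_diff_le[OF lip]
        norm_krr_min_diff_f_IF_le_tau2[OF z_in y_in lipschitz_on_nonneg[OF lip]]
      by (rule order_trans)
  qed
  then show ?thesis
    using Y_in y_in by auto
qed

end
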